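(* For a tempered distribution $\psi\in\mathcal S'(\mathbb R^d)$ the following are equivalent: (i) $\psi$ is translation bounded on $\mathcal S$, i.e. $\psi*f$ is bounded for every $f\in\mathcal S$; (ii) for all $f\in\mathcal S$, $\psi*f$ is bounded and uniformly continuous; (iii) there exist $M,N\in\mathbb Z_+$ and $C>0$ such that $\|\psi*f\|_\infty\le C\|f\|_{M,N}$ for all $f\in\mathcal S$; (iv) the functionals $\{T_t\psi:t\in\mathbb R^d\}$ are equicontinuous on $\mathcal S$.
   Context: $\psi*f(t):=\psi(T_tf_-)$, $f_-(s)=f(-s)$, $T_tf(x)=f(x-t)$, and $T_t\psi(f)=\psi(T_{-t}f)$. For $M,N\in\mathbb Z_+$, $\|f\|_{M,N}=\sup_{|\alpha|\le M,|\beta|\le N}\sup_{x\in\mathbb R^d}|x^\alpha D^\beta f(x)|$. *)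

theory Defs
  imports "HOL-Analysis.Analysis"
begin

text \<open>Points of R^d are vectors of type real^'d (the dimension d = CARD('d) is arbitrary
 but fixed); test functions are complex valued.\<close>

type_synonym 'd testfun = "real^'d \<Rightarrow> complex"

definition partial :: "'d::finite \<Rightarrow> 'd testfun \<Rightarrow> 'd testfun" where
  "partial i f = (\<lambda>x. vector_derivative (\<lambda>t::real. f (x + t *\<^sub>R axis i 1)) (at 0))"

fun Dl :: "'d::finite list \<Rightarrow> 'd testfun \<Rightarrow> 'd testfun" where
  "Dl [] f = f"
| "Dl (i # is) f = partial i (Dl is f)"

definition monom :: "('d::finite \<Rightarrow> nat) \<Rightarrow> real^'d \<Rightarrow> real" where
  "monom \<alpha> x = (\<Prod>i\<in>UNIV. (x $ i) ^ \<alpha> i)"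

definition schwartz :: "'d::finite testfun set" where
  "schwartz = {f. (\<forall>is x. Dl is f differentiable (at x)) \<and>
      (\<forall>\<alpha> is. bounded (range (\<lambda>x. complex_of_real (monom \<alpha> x) * Dl is f x)))}"

text \<open>The seminorm ||f||_{M,N} = sup_{|alpha|<=M, |beta|<=N} sup_x |x^alpha D^beta f(x)|
 (derivatives of order <= N are indexed by direction lists of length <= N).\<close>
definition normMN :: "nat \<Rightarrow> nat \<Rightarrow> 'd::finite testfun \<Rightarrow> real" where
  "normMN M N f = Sup {norm (complex_of_real (monom \<alpha> x) * Dl is f x) | \<alpha> is x.
       sum \<alpha> UNIV \<le> M \<and> length is \<le> N}"

text \<open>Basic neighbourhoods of g in the Schwartz topology (generated by the seminorms).\<close>
definition sball :: "'d::finite testfun \<Rightarrow> nat \<Rightarrow> nat \<Rightarrow> real \<Rightarrow> 'd testfun set" where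
  "sball g M N \<delta> = {f \<in> schwartz. normMN M N (f - g) < \<delta>}"

definition tempered :: "('d::finite testfun \<Rightarrow> complex) \<Rightarrow> bool" where
  "tempered \<psi> \<longleftrightarrow>
     (\<forall>f\<in>schwartz. \<forall>g\<in>schwartz. \<forall>a b::complex.
         \<psi> (\<lambda>x. a * f x + b * g x) = a * \<psi> f + b * \<psi> g) \<and>
     (\<forall>g\<in>schwartz. \<forall>\<epsilon>>0. \<exists>M N \<delta>. \<delta> > 0 \<and>
         (\<forall>f\<in>sball g M N \<delta>. norm (\<psi> f - \<psi> g) < \<epsilon>))"

definition transl :: "real^'d \<Rightarrow> 'd::finite testfun \<Rightarrow> 'd testfun" where
  "transl t f = (\<lambda>x. f (x - t))"

definition reflect :: "'d::finite testfun \<Rightarrow> 'd testfun" where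
  "reflect f = (\<lambda>s. f (- s))"

definition transl_distr :: "real^'d \<Rightarrow> ('d::finite testfun \<Rightarrow> complex) \<Rightarrow> ('d testfun \<Rightarrow> complex)" where
  "transl_distr t \<psi> = (\<lambda>f. \<psi> (transl (- t) f))"

definition dconv :: "('d::finite testfun \<Rightarrow> complex) \<Rightarrow> 'd testfun \<Rightarrow> real^'d \<Rightarrow> complex" where
  "dconv \<psi> f t = \<psi> (transl t (reflect f))"

definition equicont_S :: "('i \<Rightarrow> ('d::finite testfun \<Rightarrow> complex)) \<Rightarrow> 'i set \<Rightarrow> bool" where
  "equicont_S \<Phi> I \<longleftrightarrow> (\<forall>g\<in>schwartz. \<forall>\<epsilon>>0. \<exists>M N \<delta>. \<delta> > 0 \<and>
       (\<forall>i\<in>I. \<forall>f\<in>sball g M N \<delta>. norm (\<Phi> i f - \<Phi> i g) < \<epsilon>))"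

end

theory Submission
  imports Defs
begin

text \<open>Reflection turns \<open>\<psi> * f\<close> into \<open>t \<mapsto> \<psi>(T_t g)\<close>, so everything is about the translates
  of \<open>\<psi>\<close>. A uniform bound \<open>|\<psi>(T_t g)| \<le> C \<parallel>g\<parallel>_{M,N}\<close> is the same as equicontinuity of the
  translates, and it yields uniform continuity of \<open>\<psi> * f\<close> since
  \<open>\<parallel>T_h g - g\<parallel>_{M,N} = O(|h| \<parallel>g\<parallel>_{M,N+1})\<close> by the mean value theorem.
  The substance is that boundedness of every \<open>\<psi> * f\<close> already forces such a bound, by a gliding
  hump argument: otherwise choose \<open>g_k\<close> with \<open>\<parallel>g_k\<parallel>_{k,k}\<close> tiny and \<open>t_k\<close> with \<open>|\<psi>(T_{t_k} g_k)|\<close>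
  huge. Then \<open>g = \<Sum> g_k\<close> is a Schwartz function, and at \<open>t_n\<close> the term \<open>g_n\<close> outweighs both the
  bounded translates of \<open>g_0, ..., g_{n-1}\<close> and the tail, whose seminorms were chosen small against
  the polynomial growth of \<open>\<psi>(T_t \<cdot>)\<close> in \<open>t\<close>; so \<open>\<psi>(T_t g)\<close> would be unbounded.\<close>

section \<open>Partial derivatives of test functions\<close>

lemma partial_eq_derivative:
  assumes "(h has_derivative D) (at x)"
  shows "partial i h x = D (axis i 1)"
proof -
  let ?e = "axis i (1::real)"
  have d1: "((\<lambda>t::real. x + t *\<^sub>R ?e) has_derivative (\<lambda>t. t *\<^sub>R ?e)) (at 0)"
    by (auto intro!: derivative_eq_intros)
  have d2: "(h has_derivative D) (at (x + 0 *\<^sub>R ?e))" using assms by simp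
  have "((\<lambda>t. h (x + t *\<^sub>R ?e)) has_derivative (\<lambda>t. D (t *\<^sub>R ?e))) (at 0)"
    using has_derivative_compose[OF d1 d2] by (simp add: o_def)
  hence "((\<lambda>t. h (x + t *\<^sub>R ?e)) has_vector_derivative D ?e) (at 0)"
    unfolding has_vector_derivative_def
    using linear_scale[OF has_derivative_linear[OF assms]] by simp
  thus ?thesis unfolding partial_def by (rule vector_derivative_at)
qed

lemma has_derivative_partials:
  fixes h :: "'d::finite testfun"
  assumes "h differentiable (at x)"
  shows "(h has_derivative (\<lambda>v. \<Sum>i\<in>UNIV. of_real (v $ i) * partial i h x)) (at x)"
proof -
  obtain D where D: "(h has_derivative D) (at x)" using assms differentiable_def by blast
  have l: "linear D" using D has_derivative_linear by blast
  have "D v = (\<Sum>i\<in>UNIV. of_real (v $ i) * partial i h x)" for v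
  proof -
    have "D v = D (\<Sum>i\<in>UNIV. v $ i *\<^sub>R axis i 1)"
      using basis_expansion[of v] by (simp add: scalar_mult_eq_scaleR)
    also have "\<dots> = (\<Sum>i\<in>UNIV. v $ i *\<^sub>R D (axis i 1))"
      by (simp add: linear_sum[OF l] linear_scale[OF l])
    also have "\<dots> = (\<Sum>i\<in>UNIV. of_real (v $ i) * partial i h x)"
      by (simp add: partial_eq_derivative[OF D] scaleR_conv_of_real)
    finally show ?thesis .
  qed
  with D show ?thesis by (metis (no_types, lifting) ext)
qed

lemma sum_axis_mult: "(\<Sum>j\<in>UNIV. of_real (axis i (1::real) $ j) * c j) = (c i :: complex)"
proof -
  have "\<And>j. of_real (axis i (1::real) $ j) * c j = (if i = j then c j else 0)"
    by (auto simp: axis_def)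
  thus ?thesis by simp
qed

lemma partial_lincomb:
  fixes f g :: "'d::finite testfun"
  assumes "f differentiable (at x)" "g differentiable (at x)"
  shows "partial i (\<lambda>y. a * f y + b * g y) x = a * partial i f x + b * partial i g x"
proof -
  have "((\<lambda>y. a * f y + b * g y) has_derivative
     (\<lambda>v. a * (\<Sum>i\<in>UNIV. of_real (v $ i) * partial i f x)
        + b * (\<Sum>i\<in>UNIV. of_real (v $ i) * partial i g x))) (at x)"
    using has_derivative_partials[OF assms(1)] has_derivative_partials[OF assms(2)]
    by (auto intro!: derivative_eq_intros)
  from partial_eq_derivative[OF this, of i] show ?thesis by (simp add: sum_axis_mult)
qed

lemma partial_reflect:
  fixes H :: "'d::finite testfun"
  assumes "H differentiable (at (- x))"
  shows "partial i (\<lambda>y. c * H (- y)) x = - c * partial i H (- x)"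
    and "(\<lambda>y. c * H (- y)) differentiable (at x)"
proof -
  let ?D = "\<lambda>v. \<Sum>i\<in>UNIV. of_real (v $ i) * partial i H (- x)"
  have "(uminus has_derivative uminus) (at x)" by (auto intro!: derivative_eq_intros)
  from has_derivative_compose[OF this has_derivative_partials[OF assms]]
  have d: "((\<lambda>y. c * H (- y)) has_derivative (\<lambda>v. c * ?D (- v))) (at x)"
    by (auto simp: o_def intro!: derivative_eq_intros)
  thus "(\<lambda>y. c * H (- y)) differentiable (at x)" unfolding differentiable_def by blast
  have "partial i (\<lambda>y. c * H (- y)) x = c * ?D (- axis i 1)" by (rule partial_eq_derivative[OF d])
  also have "\<dots> = - c * (\<Sum>j\<in>UNIV. of_real (axis i (1::real) $ j) * partial j H (- x))"
    by (simp add: sum_negf)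
  also have "\<dots> = - c * partial i H (- x)" by (simp add: sum_axis_mult)
  finally show "partial i (\<lambda>y. c * H (- y)) x = - c * partial i H (- x)" .
qed

lemma Dl_transl: "Dl is (transl t f) = transl t (Dl is f)"
proof (induction "is")
  case (Cons i "is")
  have "partial i (transl t g) = transl t (partial i g)" for g :: "'a testfun"
    unfolding partial_def transl_def by (rule ext) (simp add: algebra_simps)
  with Cons show ?case by simp
qed simp

lemma transl_differentiable_iff:
  "transl t f differentiable (at x) \<longleftrightarrow> f differentiable (at (x - t))"
proof
  assume "transl t f differentiable (at x)"
  hence "(transl t f \<circ> (\<lambda>y. y + t)) differentiable (at (x - t))"
    by (intro differentiable_chain_at) (auto intro!: derivative_intros)
  thus "f differentiable (at (x - t))" by (simp add: o_def transl_def)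
next
  assume "f differentiable (at (x - t))"
  hence "(f \<circ> (\<lambda>y. y - t)) differentiable (at x)"
    by (intro differentiable_chain_at) (auto intro!: derivative_intros)
  thus "transl t f differentiable (at x)" by (simp add: o_def transl_def)
qed

lemma norm_diff_le_partials:
  fixes G :: "'d::finite testfun"
  assumes diff: "\<And>z. G differentiable (at z)"
    and bound: "\<And>i s. s \<in> {0..1} \<Longrightarrow> norm (partial i G (x + s *\<^sub>R h)) \<le> B"
  shows "norm (G (x + h) - G x) \<le> norm h * (real CARD('d) * B)"
proof (rule differentiable_bound_segment[where G = UNIV])
  show "(G has_derivative (\<lambda>v. \<Sum>i\<in>UNIV. of_real (v $ i) * partial i G z)) (at z within UNIV)"
    for z using has_derivative_partials[OF diff] by simp
  show "onorm (\<lambda>v. \<Sum>i\<in>UNIV. of_real (v $ i) * partial i G (x + s *\<^sub>R h)) \<le> real CARD('d) * B"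
    if s: "s \<in> {0..1}" for s
  proof (rule onorm_le)
    fix v :: "real^'d"
    have "norm (\<Sum>i\<in>UNIV. of_real (v $ i) * partial i G (x + s *\<^sub>R h))
        \<le> (\<Sum>i\<in>(UNIV::'d set). norm v * B)"
      by (rule order_trans[OF norm_sum sum_mono])
        (auto simp: norm_mult intro!: mult_mono component_le_norm_cart bound[OF s])
    thus "norm (\<Sum>i\<in>UNIV. of_real (v $ i) * partial i G (x + s *\<^sub>R h)) \<le> real CARD('d) * B * norm v"
      by (simp add: algebra_simps)
  qed
qed auto

section \<open>The Schwartz space\<close>

definition smooth :: "'d::finite testfun \<Rightarrow> bool" where
  "smooth f \<longleftrightarrow> (\<forall>is x. Dl is f differentiable (at x))"

lemma bounded_range_iff: "bounded (range h) \<longleftrightarrow> (\<exists>B. \<forall>x. norm (h x) \<le> B)"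
  by (auto simp: bounded_iff)

lemma schwartz_iff: "f \<in> schwartz \<longleftrightarrow> smooth f \<and>
   (\<forall>\<alpha> is. \<exists>B. \<forall>x. norm (complex_of_real (monom \<alpha> x) * Dl is f x) \<le> B)"
  unfolding schwartz_def smooth_def bounded_range_iff by simp

lemma schwartz_smooth: "f \<in> schwartz \<Longrightarrow> smooth f"
  by (simp add: schwartz_iff)

lemma Dl_lincomb:
  assumes "smooth f" "smooth g"
  shows "Dl is (\<lambda>y. a * f y + b * g y) = (\<lambda>y. a * Dl is f y + b * Dl is g y)"
proof (induction "is")
  case (Cons i "is")
  have "Dl (i # is) (\<lambda>y. a * f y + b * g y) = partial i (\<lambda>y. a * Dl is f y + b * Dl is g y)"
    using Cons by simp
  also have "\<dots> = (\<lambda>y. a * Dl (i # is) f y + b * Dl (i # is) g y)"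
    using assms unfolding smooth_def by (auto intro!: ext partial_lincomb)
  finally show ?case .
qed simp

lemma smooth_lincomb:
  assumes "smooth f" "smooth g"
  shows "smooth (\<lambda>y. a * f y + b * g y)"
  using assms unfolding smooth_def Dl_lincomb[OF assms]
  by (auto intro!: differentiable_compose[of "\<lambda>z. z"] derivative_intros)

lemma schwartz_lincomb:
  assumes "f \<in> schwartz" "g \<in> schwartz"
  shows "(\<lambda>y. a * f y + b * g y) \<in> schwartz"
proof -
  have sf: "smooth f" and sg: "smooth g" using assms schwartz_smooth by blast+
  have "\<exists>B. \<forall>x. norm (complex_of_real (monom \<alpha> x) * Dl is (\<lambda>y. a * f y + b * g y) x) \<le> B"
    for \<alpha> "is"
  proof -
    obtain Bf where Bf: "\<And>x. norm (complex_of_real (monom \<alpha> x) * Dl is f x) \<le> Bf"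
      using assms(1) unfolding schwartz_iff by blast
    obtain Bg where Bg: "\<And>x. norm (complex_of_real (monom \<alpha> x) * Dl is g x) \<le> Bg"
      using assms(2) unfolding schwartz_iff by blast
    have "norm (complex_of_real (monom \<alpha> x) * Dl is (\<lambda>y. a * f y + b * g y) x)
        \<le> norm a * Bf + norm b * Bg" for x
    proof -
      have "complex_of_real (monom \<alpha> x) * Dl is (\<lambda>y. a * f y + b * g y) x
          = a * (complex_of_real (monom \<alpha> x) * Dl is f x)
            + b * (complex_of_real (monom \<alpha> x) * Dl is g x)"
        by (simp add: Dl_lincomb[OF sf sg] algebra_simps)
      also have "norm \<dots> \<le> norm a * norm (complex_of_real (monom \<alpha> x) * Dl is f x)
                          + norm b * norm (complex_of_real (monom \<alpha> x) * Dl is g x)"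
        by (rule order_trans[OF norm_triangle_ineq]) (simp add: norm_mult)
      also have "\<dots> \<le> norm a * Bf + norm b * Bg"
        by (intro add_mono mult_left_mono Bf Bg) auto
      finally show ?thesis .
    qed
    thus ?thesis by blast
  qed
  thus ?thesis using smooth_lincomb[OF sf sg] unfolding schwartz_iff by blast
qed

lemma schwartz_diff: "f \<in> schwartz \<Longrightarrow> g \<in> schwartz \<Longrightarrow> (\<lambda>y. f y - g y) \<in> schwartz"
  using schwartz_lincomb[of f g 1 "-1"] by simp

lemma schwartz_scale: "f \<in> schwartz \<Longrightarrow> (\<lambda>y. c * f y) \<in> schwartz"
  using schwartz_lincomb[of f f c 0] by simp

lemma Dl_diff: "smooth f \<Longrightarrow> smooth g \<Longrightarrow> Dl is (\<lambda>y. f y - g y) = (\<lambda>y. Dl is f y - Dl is g y)"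
  using Dl_lincomb[of f g "is" 1 "-1"] by simp

lemma Dl_zero: "Dl is (\<lambda>_. 0) = (\<lambda>_. 0)"
proof (induction "is")
  case (Cons i "is")
  have "partial i (\<lambda>_. 0) = (\<lambda>_. 0)"
    unfolding partial_def by (auto intro!: ext vector_derivative_at)
  with Cons show ?case by simp
qed simp

lemma schwartz_zero: "(\<lambda>_. 0) \<in> schwartz"
  unfolding schwartz_def by (simp add: Dl_zero)

lemma smooth_sum_Dl_sum:
  fixes n :: nat
  assumes "\<And>k. smooth (f k)"
  shows "smooth (\<lambda>x. \<Sum>k<n. f k x) \<and> Dl is (\<lambda>x. \<Sum>k<n. f k x) = (\<lambda>x. \<Sum>k<n. Dl is (f k) x)"
proof (induction n)
  case 0
  show ?case by (simp add: smooth_def Dl_zero)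
next
  case (Suc n)
  have "(\<lambda>x. \<Sum>k<Suc n. f k x) = (\<lambda>x. 1 * (\<Sum>k<n. f k x) + 1 * f n x)" by simp
  thus ?case using Dl_lincomb[of "\<lambda>x. \<Sum>k<n. f k x" "f n" "is" 1 1]
      smooth_lincomb[of "\<lambda>x. \<Sum>k<n. f k x" "f n" 1 1] Suc assms by simp
qed

lemma schwartz_sum:
  fixes n :: nat
  shows "(\<And>k. f k \<in> schwartz) \<Longrightarrow> (\<lambda>x. \<Sum>k<n. f k x) \<in> schwartz"
proof (induction n)
  case (Suc n)
  then show ?case using schwartz_lincomb[of "\<lambda>x. \<Sum>k<n. f k x" "f n" 1 1] by simp
qed (simp add: schwartz_zero)

section \<open>The seminorms\<close>

lemma finite_multiindex_lists:
  "finite {(\<alpha>::'d::finite \<Rightarrow> nat, is::'d list). sum \<alpha> UNIV \<le> M \<and> length is \<le> N}"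
proof (rule finite_subset)
  show "{(\<alpha>::'d \<Rightarrow> nat, is::'d list). sum \<alpha> UNIV \<le> M \<and> length is \<le> N}
     \<subseteq> Pi\<^sub>E UNIV (\<lambda>_. {..M}) \<times> {is. set is \<subseteq> UNIV \<and> length is \<le> N}"
  proof clarsimp
    fix \<alpha> :: "'d \<Rightarrow> nat"
    assume "sum \<alpha> UNIV \<le> M"
    moreover have "\<And>i. \<alpha> i \<le> sum \<alpha> UNIV" by (rule member_le_sum) auto
    ultimately show "\<alpha> \<in> Pi\<^sub>E UNIV (\<lambda>_. {..M})" by (auto simp: PiE_UNIV_domain intro: order_trans)
  qed
qed (intro finite_cartesian_product finite_PiE finite_lists_length_le; simp)

lemma normMN_ge:
  fixes f :: "'d::finite testfun"
  assumes "f \<in> schwartz" "sum \<alpha> UNIV \<le> M" "length is \<le> N"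
  shows "norm (complex_of_real (monom \<alpha> x) * Dl is f x) \<le> normMN M N f"
proof -
  let ?P = "{(\<alpha>::'d \<Rightarrow> nat, is::'d list). sum \<alpha> UNIV \<le> M \<and> length is \<le> N}"
  have "\<forall>p. \<exists>B. \<forall>x. norm (complex_of_real (monom (fst p) x) * Dl (snd p) f x) \<le> B"
    using assms(1) unfolding schwartz_iff by blast
  then obtain B where B: "\<And>\<alpha> (is :: 'd list) x. norm (complex_of_real (monom \<alpha> x) * Dl is f x) \<le> B (\<alpha>, is)"
    by (metis fst_conv snd_conv)
  have "bdd_above {norm (complex_of_real (monom \<alpha> x) * Dl is f x) | \<alpha> is x.
                    sum \<alpha> UNIV \<le> M \<and> length is \<le> N}"
  proof (rule bdd_aboveI, clarify)
    fix \<alpha> :: "'d \<Rightarrow> nat" and "is" :: "'d list" and x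
    assume "sum \<alpha> UNIV \<le> M" "length is \<le> N"
    hence "\<bar>B (\<alpha>, is)\<bar> \<le> (\<Sum>p\<in>?P. \<bar>B p\<bar>)"
      by (intro member_le_sum finite_multiindex_lists) auto
    moreover have "norm (complex_of_real (monom \<alpha> x) * Dl is f x) \<le> B (\<alpha>, is)" by (rule B)
    ultimately show "norm (complex_of_real (monom \<alpha> x) * Dl is f x) \<le> (\<Sum>p\<in>?P. \<bar>B p\<bar>)"
      by linarith
  qed
  thus ?thesis unfolding normMN_def by (rule cSup_upper[rotated]) (use assms in auto)
qed

lemma normMN_le:
  assumes "\<And>\<alpha> is x. sum \<alpha> UNIV \<le> M \<Longrightarrow> length is \<le> N \<Longrightarrow>
             norm (complex_of_real (monom \<alpha> x) * Dl is f x) \<le> B"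
  shows "normMN M N f \<le> B"
  unfolding normMN_def
proof (rule cSup_least)
  show "{norm (complex_of_real (monom \<alpha> x) * Dl is f x) | \<alpha> is x.
           sum \<alpha> UNIV \<le> M \<and> length is \<le> N} \<noteq> {}"
    by (auto intro!: exI[of _ "\<lambda>_. 0"] exI[of _ "[]"])
qed (use assms in auto)

lemma norm_le_normMN:
  assumes "f \<in> schwartz" "length is \<le> N"
  shows "norm (Dl is f x) \<le> normMN M N f"
  using normMN_ge[OF assms(1), of "\<lambda>_. 0" M "is" N x] assms(2) by (simp add: monom_def)

lemma normMN_nonneg:
  assumes "f \<in> schwartz" shows "0 \<le> normMN M N f"
  using order_trans[OF norm_ge_zero norm_le_normMN[OF assms, of "[]" N 0 M]] by simp

lemma normMN_eq_0D: "f \<in> schwartz \<Longrightarrow> normMN M N f = 0 \<Longrightarrow> f = (\<lambda>_. 0)"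
  using norm_le_normMN[of f "[]" N _ M] by (auto intro!: ext)

lemma normMN_scale_le:
  fixes f :: "'d::finite testfun"
  assumes "f \<in> schwartz"
  shows "normMN M N (\<lambda>y. c * f y) \<le> norm c * normMN M N f"
proof (rule normMN_le)
  fix \<alpha> :: "'d \<Rightarrow> nat" and "is" :: "'d list" and x
  assume "sum \<alpha> UNIV \<le> M" "length is \<le> N"
  hence "norm c * norm (complex_of_real (monom \<alpha> x) * Dl is f x) \<le> norm c * normMN M N f"
    by (intro mult_left_mono normMN_ge assms) auto
  thus "norm (complex_of_real (monom \<alpha> x) * Dl is (\<lambda>y. c * f y) x) \<le> norm c * normMN M N f"
    using Dl_lincomb[OF schwartz_smooth[OF assms] schwartz_smooth[OF assms], of "is" c 0]
    by (simp add: norm_mult mult.left_commute)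
qed

lemma normMN_scale:
  assumes "f \<in> schwartz"
  shows "normMN M N (\<lambda>y. c * f y) = norm c * normMN M N f"
proof (cases "c = 0")
  case True
  have "normMN M N (\<lambda>y. c * f y) \<le> 0" using normMN_scale_le[OF assms, of M N c] True by simp
  moreover have "0 \<le> normMN M N (\<lambda>y. c * f y)" using True schwartz_zero normMN_nonneg by simp
  ultimately show ?thesis using True by simp
next
  case False
  have "normMN M N f = normMN M N (\<lambda>y. inverse c * (c * f y))"
    using False by (simp add: mult.assoc[symmetric])
  also have "\<dots> \<le> norm (inverse c) * normMN M N (\<lambda>y. c * f y)"
    by (rule normMN_scale_le[OF schwartz_scale[OF assms]])
  finally have "norm c * normMN M N f \<le> norm c * (norm (inverse c) * normMN M N (\<lambda>y. c * f y))"
    by (intro mult_left_mono) auto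
  also have "\<dots> = normMN M N (\<lambda>y. c * f y)" using False by (simp add: norm_inverse)
  finally have "norm c * normMN M N f \<le> normMN M N (\<lambda>y. c * f y)" .
  with normMN_scale_le[OF assms, of M N c] show ?thesis by linarith
qed

section \<open>Translation and reflection\<close>

lemma abs_monom_le: "\<bar>monom \<alpha> z\<bar> \<le> (1 + norm z) ^ sum \<alpha> UNIV"
proof -
  have "\<bar>monom \<alpha> z\<bar> = (\<Prod>i\<in>UNIV. \<bar>z $ i\<bar> ^ \<alpha> i)" by (simp add: monom_def abs_prod power_abs)
  also have "\<dots> \<le> (\<Prod>i\<in>UNIV. (1 + norm z) ^ \<alpha> i)"
    by (intro prod_mono conjI power_mono) (auto intro: order_trans[OF component_le_norm_cart])
  also have "\<dots> = (1 + norm z) ^ sum \<alpha> UNIV" by (simp add: power_sum)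
  finally show ?thesis .
qed

lemma abs_monom_uminus: "\<bar>monom \<alpha> (- x)\<bar> = \<bar>monom \<alpha> x\<bar>"
  by (simp add: monom_def abs_prod power_abs)

lemma one_plus_power_le: "(0::real) \<le> a \<Longrightarrow> (1 + a) ^ m \<le> 2 ^ m * (1 + a ^ m)"
proof -
  assume a: "0 \<le> a"
  have "(1 + a) ^ m \<le> (2 * max 1 a) ^ m" by (intro power_mono) (use a in auto)
  also have "\<dots> = 2 ^ m * max 1 a ^ m" by (simp add: power_mult_distrib)
  also have "max 1 a ^ m \<le> 1 + a ^ m" by (cases "a \<le> 1") (auto simp: max_def a)
  hence "2 ^ m * max 1 a ^ m \<le> 2 ^ m * (1 + a ^ m)" by simp
  finally show ?thesis .
qed

definition unit_multiindex :: "'d::finite \<Rightarrow> nat \<Rightarrow> 'd \<Rightarrow> nat" where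
  "unit_multiindex j m = (\<lambda>k. if k = j then m else 0)"

lemma monom_unit_multiindex: "monom (unit_multiindex j m) y = (y $ j) ^ m"
  unfolding monom_def unit_multiindex_def
  by (simp add: if_distrib[of "\<lambda>e. _ ^ e"] prod.If_cases)

lemma sum_unit_multiindex: "sum (unit_multiindex j m) UNIV = m"
  unfolding unit_multiindex_def by (subst sum.delta) auto

lemma norm_power_le_coordinate:
  fixes y :: "real^'d::finite"
  obtains j where "norm y ^ m \<le> real CARD('d) ^ m * \<bar>y $ j\<bar> ^ m"
proof -
  have "Max (range (\<lambda>i. \<bar>y $ i\<bar>)) \<in> range (\<lambda>i. \<bar>y $ i\<bar>)" by (rule Max_in) auto
  then obtain j where jmax: "Max (range (\<lambda>i. \<bar>y $ i\<bar>)) = \<bar>y $ j\<bar>" by blast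
  have "\<bar>y $ i\<bar> \<le> Max (range (\<lambda>i. \<bar>y $ i\<bar>))" for i by (rule Max_ge) auto
  hence j: "\<And>i. \<bar>y $ i\<bar> \<le> \<bar>y $ j\<bar>" unfolding jmax .
  have "norm y \<le> (\<Sum>i\<in>UNIV. \<bar>y $ i\<bar>)" by (rule norm_le_l1_cart)
  also have "\<dots> \<le> (\<Sum>i\<in>(UNIV::'d set). \<bar>y $ j\<bar>)" by (intro sum_mono j)
  also have "\<dots> = real CARD('d) * \<bar>y $ j\<bar>" by simp
  finally have "norm y ^ m \<le> (real CARD('d) * \<bar>y $ j\<bar>) ^ m" by (intro power_mono) auto
  thus ?thesis using that by (simp add: power_mult_distrib)
qed

text \<open>Peetre's inequality \<open>1 + |y + t| \<le> (1 + |t|) (1 + |y|)\<close> lets a weight centred at \<open>-t\<close>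
  be paid for by the seminorm, at the price of a polynomial factor in \<open>t\<close>.\<close>

lemma norm_monom_shift_Dl_le:
  fixes f :: "'d::finite testfun"
  assumes f: "f \<in> schwartz" and \<alpha>: "sum \<alpha> UNIV \<le> M" and "is": "length is \<le> N"
  shows "norm (complex_of_real (monom \<alpha> (y + t)) * Dl is f y)
           \<le> (1 + norm t) ^ M * 2 ^ M * (1 + real CARD('d) ^ M) * normMN M N f"
proof -
  let ?A = "normMN M N f"
  have A0: "norm (Dl is f y) \<le> ?A" by (rule norm_le_normMN[OF f "is"])
  have "\<bar>monom \<alpha> (y + t)\<bar> \<le> (1 + norm (y + t)) ^ M"
    by (rule order_trans[OF abs_monom_le power_increasing[OF \<alpha>]]) auto
  also have "\<dots> \<le> ((1 + norm t) * (1 + norm y)) ^ M"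
  proof (intro power_mono)
    have "norm (y + t) \<le> norm y + norm t" by (rule norm_triangle_ineq)
    moreover have "0 \<le> norm t * norm y" by simp
    moreover have "(1 + norm t) * (1 + norm y) = 1 + norm t + norm y + norm t * norm y"
      by (simp add: algebra_simps)
    ultimately show "1 + norm (y + t) \<le> (1 + norm t) * (1 + norm y)" by linarith
  qed simp
  also have "\<dots> \<le> (1 + norm t) ^ M * (2 ^ M * (1 + norm y ^ M))"
    unfolding power_mult_distrib by (intro mult_left_mono one_plus_power_le) auto
  finally have m1: "\<bar>monom \<alpha> (y + t)\<bar> \<le> (1 + norm t) ^ M * (2 ^ M * (1 + norm y ^ M))" .
  obtain j where j: "norm y ^ M \<le> real CARD('d) ^ M * \<bar>y $ j\<bar> ^ M"
    by (rule norm_power_le_coordinate)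
  have "\<bar>y $ j\<bar> ^ M * norm (Dl is f y) \<le> ?A"
    using normMN_ge[OF f _ "is", of "unit_multiindex j M" M y]
    by (simp add: sum_unit_multiindex monom_unit_multiindex norm_mult norm_power)
  hence m2: "norm y ^ M * norm (Dl is f y) \<le> real CARD('d) ^ M * ?A"
    by (intro order_trans[OF mult_right_mono[OF j]]) (auto simp: mult.assoc)
  have "norm (complex_of_real (monom \<alpha> (y + t)) * Dl is f y)
      = \<bar>monom \<alpha> (y + t)\<bar> * norm (Dl is f y)" by (simp add: norm_mult)
  also have "\<dots> \<le> (1 + norm t) ^ M * (2 ^ M * (1 + norm y ^ M)) * norm (Dl is f y)"
    by (intro mult_right_mono m1) auto
  also have "\<dots> = (1 + norm t) ^ M * 2 ^ M * (norm (Dl is f y) + norm y ^ M * norm (Dl is f y))"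
    by (simp add: algebra_simps)
  also have "\<dots> \<le> (1 + norm t) ^ M * 2 ^ M * (?A + real CARD('d) ^ M * ?A)"
    by (intro mult_left_mono add_mono A0 m2) auto
  finally show ?thesis by (simp add: algebra_simps)
qed

lemma transl_schwartz:
  fixes f :: "'d::finite testfun"
  assumes "f \<in> schwartz" shows "transl t f \<in> schwartz"
proof -
  have "smooth (transl t f)"
    using schwartz_smooth[OF assms] unfolding smooth_def Dl_transl transl_differentiable_iff by blast
  moreover have "norm (complex_of_real (monom \<alpha> x) * Dl is (transl t f) x)
      \<le> (1 + norm t) ^ sum \<alpha> UNIV * 2 ^ sum \<alpha> UNIV * (1 + real CARD('d) ^ sum \<alpha> UNIV)
         * normMN (sum \<alpha> UNIV) (length is) f" for \<alpha> "is" x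
    using norm_monom_shift_Dl_le[OF assms, of \<alpha> "sum \<alpha> UNIV" "is" "length is" "x - t" t]
    unfolding Dl_transl by (simp add: transl_def)
  ultimately show ?thesis unfolding schwartz_iff by blast
qed

lemma normMN_transl_le:
  fixes f :: "'d::finite testfun"
  assumes "f \<in> schwartz"
  shows "normMN M N (transl t f) \<le> (1 + norm t) ^ M * 2 ^ M * (1 + real CARD('d) ^ M) * normMN M N f"
proof (rule normMN_le)
  fix \<alpha> :: "'d \<Rightarrow> nat" and "is" :: "'d list" and x
  assume "sum \<alpha> UNIV \<le> M" "length is \<le> N"
  from norm_monom_shift_Dl_le[OF assms this, of "x - t" t]
  show "norm (complex_of_real (monom \<alpha> x) * Dl is (transl t f) x)
        \<le> (1 + norm t) ^ M * 2 ^ M * (1 + real CARD('d) ^ M) * normMN M N f"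
    unfolding Dl_transl by (simp add: transl_def)
qed

lemma transl_transl: "transl s (transl h g) = transl (s + h) g"
  by (simp add: transl_def fun_eq_iff algebra_simps)

text \<open>The mean value theorem on the segment from \<open>x\<close> to \<open>x - h\<close>: at each of its points the
  weight \<open>monom \<alpha> x\<close> is a shift by at most \<open>|h| \<le> 1\<close>, so \<open>norm_monom_shift_Dl_le\<close> bounds the
  weighted first derivatives there.\<close>

lemma normMN_transl_diff_le:
  fixes g :: "'d::finite testfun"
  assumes g: "g \<in> schwartz" and h: "norm h \<le> 1"
  shows "normMN M N (\<lambda>x. transl h g x - g x)
     \<le> norm h * (real CARD('d) * (2 ^ M * 2 ^ M * (1 + real CARD('d) ^ M) * normMN M (Suc N) g))"
proof (rule normMN_le)
  fix \<alpha> :: "'d \<Rightarrow> nat" and "is" :: "'d list" and x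
  assume \<alpha>: "sum \<alpha> UNIV \<le> M" and "is": "length is \<le> N"
  let ?K = "2 ^ M * 2 ^ M * (1 + real CARD('d) ^ M) * normMN M (Suc N) g"
  let ?m = "\<bar>monom \<alpha> x\<bar>"
  define G where "G = Dl is g"
  have K0: "0 \<le> ?K" using normMN_nonneg[OF g] by simp
  have "?m * norm (G (x + (- h)) - G x) \<le> norm h * (real CARD('d) * ?K)"
  proof (cases "?m = 0")
    case False
    have "norm (partial i G (x + s *\<^sub>R (- h))) \<le> ?K / ?m" if s: "s \<in> {0..1}" for i s
    proof -
      have "norm (s *\<^sub>R h) \<le> 1" using s h by (simp add: mult_le_one)
      hence pow: "(1 + norm (s *\<^sub>R h)) ^ M \<le> 2 ^ M" by (intro power_mono) auto
      have "norm (complex_of_real (monom \<alpha> x) * partial i G (x - s *\<^sub>R h))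
          \<le> (1 + norm (s *\<^sub>R h)) ^ M * 2 ^ M * (1 + real CARD('d) ^ M) * normMN M (Suc N) g"
        using norm_monom_shift_Dl_le[OF g \<alpha>, of "i # is" "Suc N" "x - s *\<^sub>R h" "s *\<^sub>R h"] "is"
        by (simp add: G_def)
      also have "\<dots> \<le> ?K"
        using pow normMN_nonneg[OF g, of M "Suc N"] by (intro mult_right_mono) auto
      finally show ?thesis using False by (simp add: norm_mult field_simps)
    qed
    from norm_diff_le_partials[OF _ this]
    have "norm (G (x + - h) - G x) \<le> norm h * (real CARD('d) * (?K / ?m))"
      using schwartz_smooth[OF g] unfolding smooth_def G_def by simp
    thus ?thesis using False by (simp add: field_simps)
  qed (use K0 in simp)
  moreover have "Dl is (\<lambda>x. transl h g x - g x) = (\<lambda>x. G (x - h) - G x)"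
    using Dl_diff[OF schwartz_smooth[OF transl_schwartz[OF g]] schwartz_smooth[OF g]]
    unfolding Dl_transl G_def by (simp add: transl_def)
  ultimately show "norm (complex_of_real (monom \<alpha> x) * Dl is (\<lambda>x. transl h g x - g x) x)
      \<le> norm h * (real CARD('d) * ?K)"
    by (simp add: norm_mult)
qed

lemma Dl_reflect:
  assumes "smooth f"
  shows "Dl is (reflect f) = (\<lambda>y. (-1) ^ length is * Dl is f (- y))"
proof (induction "is")
  case (Cons i "is")
  have "Dl (i # is) (reflect f) = partial i (\<lambda>y. (-1) ^ length is * Dl is f (- y))" using Cons by simp
  also have "\<dots> = (\<lambda>y. (-1) ^ length (i # is) * Dl (i # is) f (- y))"
    using assms unfolding smooth_def by (auto intro!: ext simp: partial_reflect)
  finally show ?case .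
qed (simp add: reflect_def)

lemma smooth_reflect:
  assumes f: "smooth f" shows "smooth (reflect f)"
  unfolding smooth_def
proof (intro allI)
  fix "is" x
  have "Dl is f differentiable (at (- x))" using f unfolding smooth_def by blast
  from partial_reflect(2)[OF this, of "(-1) ^ length is"]
  show "Dl is (reflect f) differentiable (at x)" by (simp add: Dl_reflect[OF f])
qed

lemma norm_monom_Dl_reflect:
  assumes "smooth f"
  shows "norm (complex_of_real (monom \<alpha> x) * Dl is (reflect f) x)
       = norm (complex_of_real (monom \<alpha> (- x)) * Dl is f (- x))"
  by (simp add: Dl_reflect[OF assms] norm_mult norm_power abs_monom_uminus)

lemma reflect_schwartz:
  assumes "f \<in> schwartz" shows "reflect f \<in> schwartz"
  using assms smooth_reflect unfolding schwartz_iff norm_monom_Dl_reflect[OF schwartz_smooth[OF assms]]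
  by blast

lemma reflect_reflect: "reflect (reflect f) = f"
  by (simp add: reflect_def)

lemma normMN_reflect_le:
  fixes f :: "'d::finite testfun"
  assumes "f \<in> schwartz" shows "normMN M N (reflect f) \<le> normMN M N f"
proof (rule normMN_le)
  fix \<alpha> :: "'d \<Rightarrow> nat" and "is" :: "'d list" and x
  assume "sum \<alpha> UNIV \<le> M" "length is \<le> N"
  from normMN_ge[OF assms this]
  show "norm (complex_of_real (monom \<alpha> x) * Dl is (reflect f) x) \<le> normMN M N f"
    by (simp add: norm_monom_Dl_reflect[OF schwartz_smooth[OF assms]])
qed

lemma normMN_reflect:
  assumes "f \<in> schwartz" shows "normMN M N (reflect f) = normMN M N f"
  using normMN_reflect_le[OF assms] normMN_reflect_le[OF reflect_schwartz[OF assms]]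
  by (auto simp: reflect_reflect intro: order.antisym)

section \<open>Tempered distributions and their translates\<close>

context
  fixes \<psi> :: "'d::finite testfun \<Rightarrow> complex"
  assumes tempered: "tempered \<psi>"
begin

lemma tempered_lincomb:
  "f \<in> schwartz \<Longrightarrow> g \<in> schwartz \<Longrightarrow> \<psi> (\<lambda>x. a * f x + b * g x) = a * \<psi> f + b * \<psi> g"
  using tempered unfolding tempered_def by blast

lemma tempered_zero: "\<psi> (\<lambda>_. 0) = 0"
  using tempered_lincomb[OF schwartz_zero schwartz_zero, of 0 0] by simp

lemma tempered_diff: "f \<in> schwartz \<Longrightarrow> g \<in> schwartz \<Longrightarrow> \<psi> (\<lambda>x. f x - g x) = \<psi> f - \<psi> g"
  using tempered_lincomb[of f g 1 "-1"] by simp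

lemma tempered_scale: "f \<in> schwartz \<Longrightarrow> \<psi> (\<lambda>x. c * f x) = c * \<psi> f"
  using tempered_lincomb[of f f c 0] by simp

lemma tempered_sum:
  fixes n :: nat
  assumes "\<And>k. f k \<in> schwartz"
  shows "\<psi> (\<lambda>x. \<Sum>k<n. f k x) = (\<Sum>k<n. \<psi> (f k))"
proof (induction n)
  case (Suc n)
  have "\<psi> (\<lambda>x. 1 * (\<Sum>k<n. f k x) + 1 * f n x) = 1 * \<psi> (\<lambda>x. \<Sum>k<n. f k x) + 1 * \<psi> (f n)"
    by (rule tempered_lincomb[OF schwartz_sum[OF assms] assms])
  then show ?case using Suc by simp
qed (simp add: tempered_zero)

lemma norm_tempered_term_le:
  assumes g: "\<And>k. g k \<in> schwartz" and F: "F \<in> schwartz"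
  shows "norm (\<psi> (g n))
    \<le> norm (\<psi> F) + norm (\<Sum>k<n. \<psi> (g k)) + norm (\<psi> (\<lambda>x. F x - (\<Sum>k<Suc n. g k x)))"
proof -
  let ?R = "\<lambda>x. F x - (\<Sum>k<Suc n. g k x)"
  have "\<psi> F = \<psi> (\<lambda>x. 1 * (\<Sum>k<Suc n. g k x) + 1 * ?R x)" by simp
  also have "\<dots> = (\<Sum>k<Suc n. \<psi> (g k)) + \<psi> ?R"
    using tempered_lincomb[where a = 1 and b = 1, OF schwartz_sum[where f = g and n = "Suc n", OF g]
        schwartz_diff[OF F schwartz_sum[where f = g and n = "Suc n", OF g]]]
      tempered_sum[where f = g and n = "Suc n", OF g] by simp
  finally have "norm (\<psi> (g n)) = norm (\<psi> F - (\<Sum>k<n. \<psi> (g k)) - \<psi> ?R)"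
    by (simp add: algebra_simps)
  also have "\<dots> \<le> norm (\<psi> F - (\<Sum>k<n. \<psi> (g k))) + norm (\<psi> ?R)"
    by (rule norm_triangle_ineq4)
  also have "\<dots> \<le> norm (\<psi> F) + norm (\<Sum>k<n. \<psi> (g k)) + norm (\<psi> ?R)"
    by (intro add_right_mono norm_triangle_ineq4)
  finally show ?thesis .
qed

end

lemma homogeneous_le_normMN:
  fixes \<Phi> :: "'d::finite testfun \<Rightarrow> complex"
  assumes hom: "\<And>g c. g \<in> schwartz \<Longrightarrow> \<Phi> (\<lambda>x. c * g x) = c * \<Phi> g"
    and \<delta>: "\<delta> > 0"
    and small: "\<And>g. g \<in> schwartz \<Longrightarrow> normMN M N g < \<delta> \<Longrightarrow> norm (\<Phi> g) < 1"
    and g: "g \<in> schwartz"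
  shows "norm (\<Phi> g) \<le> 2 / \<delta> * normMN M N g"
proof (cases "normMN M N g = 0")
  case True
  hence "\<Phi> g = \<Phi> (\<lambda>x. 0 * g x)" using normMN_eq_0D[OF g] by simp
  with True show ?thesis using hom[OF g, of 0] by simp
next
  case False
  define n where "n = normMN M N g"
  have n: "n > 0" using False normMN_nonneg[OF g, of M N] n_def by linarith
  define c where "c = \<delta> / (2 * n)"
  have c: "c > 0" using n \<delta> c_def by simp
  have "normMN M N (\<lambda>x. complex_of_real c * g x) = c * n"
    using normMN_scale[OF g, of M N "complex_of_real c"] c by (simp add: n_def)
  also have "\<dots> = \<delta> / 2" using n by (simp add: c_def)
  finally have "norm (\<Phi> (\<lambda>x. complex_of_real c * g x)) < 1"
    using small[OF schwartz_scale[OF g]] \<delta> by simp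
  hence "c * norm (\<Phi> g) < 1" using hom[OF g] c by (simp add: norm_mult)
  hence "norm (\<Phi> g) < 1 / c" using c by (simp add: field_simps)
  thus ?thesis using n \<delta> by (simp add: c_def n_def)
qed

lemma tempered_le_normMN:
  fixes \<psi> :: "'d::finite testfun \<Rightarrow> complex"
  assumes "tempered \<psi>"
  obtains C M N where "C > 0" "\<And>g. g \<in> schwartz \<Longrightarrow> norm (\<psi> g) \<le> C * normMN M N g"
proof -
  obtain M N \<delta> where \<delta>: "\<delta> > 0"
    and ball: "\<And>f. f \<in> sball (\<lambda>_. 0) M N \<delta> \<Longrightarrow> norm (\<psi> f - \<psi> (\<lambda>_. 0)) < 1"
    using assms schwartz_zero unfolding tempered_def by (metis zero_less_one)
  have "norm (\<psi> g) < 1" if "g \<in> schwartz" "normMN M N g < \<delta>" for g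
    using ball[of g] that tempered_zero[OF assms] by (simp add: sball_def fun_diff_def)
  hence "norm (\<psi> g) \<le> 2 / \<delta> * normMN M N g" if "g \<in> schwartz" for g
    using homogeneous_le_normMN[of \<psi>, OF tempered_scale[OF assms] \<delta>] that by blast
  thus ?thesis using that \<delta> by (metis divide_pos_pos zero_less_numeral)
qed

definition uniform_transl_bound :: "('d::finite testfun \<Rightarrow> complex) \<Rightarrow> nat \<Rightarrow> nat \<Rightarrow> real \<Rightarrow> bool" where
  "uniform_transl_bound \<psi> M N C \<longleftrightarrow>
     (\<forall>g\<in>schwartz. \<forall>t. norm (\<psi> (transl t g)) \<le> C * normMN M N g)"

lemma dconv_reflect: "dconv \<psi> (reflect g) t = \<psi> (transl t g)"
  by (simp add: dconv_def reflect_reflect)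

lemma bounded_dconv_iff_bounded_translates:
  "(\<forall>f\<in>schwartz. bounded (range (dconv \<psi> f))) \<longleftrightarrow>
   (\<forall>g\<in>schwartz. bounded (range (\<lambda>t. \<psi> (transl t g))))"
  by (metis (no_types, lifting) dconv_reflect reflect_reflect reflect_schwartz ext)

lemma dconv_le_normMN_iff:
  "(\<forall>f\<in>schwartz. \<forall>t. norm (dconv \<psi> f t) \<le> C * normMN M N f) \<longleftrightarrow> uniform_transl_bound \<psi> M N C"
  unfolding uniform_transl_bound_def
  by (metis dconv_reflect normMN_reflect reflect_reflect reflect_schwartz)

lemma uniform_transl_bound_imp_bounded:
  "uniform_transl_bound \<psi> M N C \<Longrightarrow> g \<in> schwartz \<Longrightarrow> bounded (range (\<lambda>t. \<psi> (transl t g)))"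
  unfolding uniform_transl_bound_def bounded_range_iff by blast

lemma uniform_transl_bound_imp_equicont:
  fixes \<psi> :: "'d::finite testfun \<Rightarrow> complex"
  assumes tempered: "tempered \<psi>" and C: "C > 0" and bound: "uniform_transl_bound \<psi> M N C"
  shows "equicont_S (\<lambda>t. transl_distr t \<psi>) UNIV"
  unfolding equicont_S_def
proof (intro ballI allI impI)
  fix g :: "'d testfun" and \<epsilon> :: real
  assume g: "g \<in> schwartz" and \<epsilon>: "\<epsilon> > 0"
  have "norm (transl_distr t \<psi> f - transl_distr t \<psi> g) < \<epsilon>" if f: "f \<in> sball g M N (\<epsilon> / C)" for t f
  proof -
    have fS: "f \<in> schwartz" and fg: "normMN M N (\<lambda>x. f x - g x) < \<epsilon> / C"
      using f unfolding sball_def fun_diff_def by auto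
    have "transl_distr t \<psi> f - transl_distr t \<psi> g = \<psi> (transl (- t) (\<lambda>x. f x - g x))"
      using tempered_diff[OF tempered transl_schwartz[OF fS, of "- t"] transl_schwartz[OF g, of "- t"]]
      by (simp add: transl_distr_def transl_def)
    also have "norm \<dots> \<le> C * normMN M N (\<lambda>x. f x - g x)"
      using bound schwartz_diff[OF fS g] unfolding uniform_transl_bound_def by blast
    also have "\<dots> < \<epsilon>" using fg C by (simp add: field_simps)
    finally show ?thesis .
  qed
  thus "\<exists>M N \<delta>. 0 < \<delta> \<and>
      (\<forall>t\<in>UNIV. \<forall>f\<in>sball g M N \<delta>. norm (transl_distr t \<psi> f - transl_distr t \<psi> g) < \<epsilon>)"
    using C \<epsilon> by (intro exI[of _ M] exI[of _ N] exI[of _ "\<epsilon> / C"]) auto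
qed

lemma equicont_imp_uniform_transl_bound:
  fixes \<psi> :: "'d::finite testfun \<Rightarrow> complex"
  assumes tempered: "tempered \<psi>" and equicont: "equicont_S (\<lambda>t. transl_distr t \<psi>) UNIV"
  obtains M N C where "C > 0" "uniform_transl_bound \<psi> M N C"
proof -
  obtain M N \<delta> where \<delta>: "\<delta> > 0" and ball: "\<And>t f. f \<in> sball (\<lambda>_. 0) M N \<delta> \<Longrightarrow>
      norm (transl_distr t \<psi> f - transl_distr t \<psi> (\<lambda>_. 0)) < 1"
    using equicont schwartz_zero unfolding equicont_S_def by (metis UNIV_I zero_less_one)
  have "norm (\<psi> (transl t g)) \<le> 2 / \<delta> * normMN M N g" if g: "g \<in> schwartz" for g t
  proof (rule homogeneous_le_normMN[OF _ \<delta> _ g])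
    show "\<psi> (transl t (\<lambda>x. c * h x)) = c * \<psi> (transl t h)" if "h \<in> schwartz" for h c
      using tempered_scale[OF tempered transl_schwartz[OF that]] by (simp add: transl_def)
    show "norm (\<psi> (transl t h)) < 1" if "h \<in> schwartz" "normMN M N h < \<delta>" for h
      using ball[of h "- t"] that tempered_zero[OF tempered]
      by (simp add: sball_def fun_diff_def transl_distr_def transl_def)
  qed
  thus ?thesis using that \<delta> unfolding uniform_transl_bound_def
    by (metis divide_pos_pos zero_less_numeral)
qed

lemma uniformly_continuous_dconv:
  fixes \<psi> :: "'d::finite testfun \<Rightarrow> complex"
  assumes tempered: "tempered \<psi>" and C: "C \<ge> 0" and bound: "uniform_transl_bound \<psi> M N C"
    and f: "f \<in> schwartz"
  shows "uniformly_continuous_on UNIV (dconv \<psi> f)"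
  unfolding uniformly_continuous_on_def
proof (intro allI impI)
  fix e :: real assume e: "e > 0"
  define g where "g = reflect f"
  have g: "g \<in> schwartz" using reflect_schwartz[OF f] g_def by simp
  define K where "K = C * (real CARD('d) * (2 ^ M * 2 ^ M * (1 + real CARD('d) ^ M) * normMN M (Suc N) g))"
  have K: "K \<ge> 0" unfolding K_def using C normMN_nonneg[OF g] by simp
  define d where "d = min 1 (e / (K + 1))"
  have "dist (dconv \<psi> f t) (dconv \<psi> f s) < e" if ts: "dist t s < d" for t s
  proof -
    let ?h = "t - s"
    have h: "norm ?h < d" using ts by (simp add: dist_norm)
    have "dconv \<psi> f t - dconv \<psi> f s = \<psi> (transl s (transl ?h g)) - \<psi> (transl s g)"
      by (simp add: dconv_def g_def transl_transl)
    also have "\<dots> = \<psi> (transl s (\<lambda>x. transl ?h g x - g x))"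
      using tempered_diff[OF tempered transl_schwartz[OF transl_schwartz[OF g, of ?h], of s]
          transl_schwartz[OF g, of s]]
      by (simp add: transl_def)
    also have "norm \<dots> \<le> C * normMN M N (\<lambda>x. transl ?h g x - g x)"
      using bound schwartz_diff[OF transl_schwartz[OF g] g] unfolding uniform_transl_bound_def by blast
    also have "\<dots> \<le> norm ?h * K"
      using mult_left_mono[OF normMN_transl_diff_le[OF g, of ?h M N] C] h
      by (simp add: K_def d_def mult.left_commute)
    also have "\<dots> \<le> e / (K + 1) * K" using h K by (intro mult_right_mono) (auto simp: d_def)
    also have "\<dots> < e" using e K by (simp add: field_simps)
    finally show ?thesis by (simp add: dist_norm)
  qed
  moreover have "d > 0" using e K by (simp add: d_def)
  ultimately show "\<exists>d>0. \<forall>x\<in>UNIV. \<forall>x'\<in>UNIV. dist x' x < d \<longrightarrow> dist (dconv \<psi> f x') (dconv \<psi> f x) < e"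
    by blast
qed

section \<open>Series converging in every seminorm\<close>

text \<open>Once \<open>k \<ge> max M N\<close>, \<open>normMN k k\<close> dominates \<open>normMN M N\<close>; so the tails of the series
  below are small in every seminorm and all derivatives converge uniformly.\<close>

locale schwartz_series =
  fixes f :: "nat \<Rightarrow> 'd::finite testfun" and c :: "nat \<Rightarrow> real"
  assumes schwartz_term: "\<And>k. f k \<in> schwartz"
    and normMN_term_le: "\<And>k. normMN k k (f k) \<le> c k"
    and summable_bound: "summable c"
begin

definition Dl_series :: "'d list \<Rightarrow> 'd testfun" where
  "Dl_series is x = (\<Sum>k. Dl is (f k) x)"

definition series :: "'d testfun" where
  "series x = (\<Sum>k. f k x)"

lemma norm_monom_Dl_term_le:
  "sum \<alpha> UNIV \<le> k \<Longrightarrow> length is \<le> k \<Longrightarrow> norm (complex_of_real (monom \<alpha> x) * Dl is (f k) x) \<le> c k"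
  by (rule order_trans[OF normMN_ge[OF schwartz_term] normMN_term_le])

lemma summable_Dl_terms: "summable (\<lambda>k. Dl is (f k) x)"
proof (rule summable_comparison_test'[OF summable_bound])
  fix k assume "length is \<le> k"
  with norm_le_normMN[OF schwartz_term[of k] this, of x k] normMN_term_le[of k]
  show "norm (Dl is (f k) x) \<le> c k" by simp
qed

lemma summable_bound_shift: "summable (\<lambda>k. c (k + n))"
  using summable_iff_shift[of c n] summable_bound by simp

lemma norm_monom_Dl_series_tail_le:
  assumes "sum \<alpha> UNIV \<le> n" "length is \<le> n"
  shows "norm (complex_of_real (monom \<alpha> x) * (Dl_series is x - (\<Sum>k<n. Dl is (f k) x)))
           \<le> (\<Sum>k. c (k + n))"
proof -
  have "Dl_series is x - (\<Sum>k<n. Dl is (f k) x) = (\<Sum>k. Dl is (f (k + n)) x)"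
    unfolding Dl_series_def using suminf_split_initial_segment[OF summable_Dl_terms, of "is" x n]
    by simp
  hence "complex_of_real (monom \<alpha> x) * (Dl_series is x - (\<Sum>k<n. Dl is (f k) x))
       = (\<Sum>k. complex_of_real (monom \<alpha> x) * Dl is (f (k + n)) x)"
    using suminf_mult[of "\<lambda>k. Dl is (f (k + n)) x" "complex_of_real (monom \<alpha> x)"]
      summable_iff_shift[of "\<lambda>k. Dl is (f k) x" n] summable_Dl_terms[of "is" x] by simp
  also have "norm \<dots> \<le> (\<Sum>k. c (k + n))"
    by (rule norm_suminf_le[OF _ summable_bound_shift])
      (use assms in \<open>auto intro!: norm_monom_Dl_term_le\<close>)
  finally show ?thesis .
qed

lemma norm_Dl_series_tail_le:
  "length is \<le> n \<Longrightarrow> norm (Dl_series is x - (\<Sum>k<n. Dl is (f k) x)) \<le> (\<Sum>k. c (k + n))"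
  using norm_monom_Dl_series_tail_le[of "\<lambda>_. 0" n "is" x] by (simp add: monom_def)

lemma norm_sum_derivatives_diff_le:
  assumes "length is < n"
  shows "norm ((\<Sum>k<n. \<Sum>i\<in>UNIV. of_real (h $ i) * Dl (i # is) (f k) x)
                 - (\<Sum>i\<in>UNIV. of_real (h $ i) * Dl_series (i # is) x))
           \<le> real CARD('d) * (\<Sum>k. c (k + n)) * norm h"
proof -
  have "(\<Sum>k<n. \<Sum>i\<in>UNIV. of_real (h $ i) * Dl (i # is) (f k) x)
          - (\<Sum>i\<in>UNIV. of_real (h $ i) * Dl_series (i # is) x)
      = (\<Sum>i\<in>UNIV. of_real (h $ i) * ((\<Sum>k<n. Dl (i # is) (f k) x) - Dl_series (i # is) x))"
    by (simp add: sum.swap[of _ "{..<_}"] sum_distrib_left sum_subtractf algebra_simps)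
  also have "norm \<dots> \<le> (\<Sum>i\<in>(UNIV::'d set). norm h * (\<Sum>k. c (k + n)))"
  proof (rule order_trans[OF norm_sum sum_mono])
    fix i :: 'd
    have "norm ((\<Sum>k<n. Dl (i # is) (f k) x) - Dl_series (i # is) x) \<le> (\<Sum>k. c (k + n))"
      using norm_Dl_series_tail_le[of "i # is" n x] assms by (simp add: norm_minus_commute)
    thus "norm (of_real (h $ i) * ((\<Sum>k<n. Dl (i # is) (f k) x) - Dl_series (i # is) x))
        \<le> norm h * (\<Sum>k. c (k + n))"
      unfolding norm_mult by (intro mult_mono) (auto intro: component_le_norm_cart)
  qed
  finally show ?thesis by (simp add: algebra_simps)
qed

lemma has_derivative_Dl_series:
  "(Dl_series is has_derivative (\<lambda>v. \<Sum>i\<in>UNIV. of_real (v $ i) * Dl_series (i # is) x)) (at x)"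
proof -
  let ?f' = "\<lambda>k x v. \<Sum>i\<in>UNIV. of_real (v $ i) * Dl (i # is) (f k) x"
  let ?g' = "\<lambda>x v. \<Sum>i\<in>UNIV. of_real (v $ i) * Dl_series (i # is) x"
  have "\<exists>g. \<forall>x\<in>UNIV. (\<lambda>k. Dl is (f k) x) sums (g x) \<and> (g has_derivative ?g' x) (at x within UNIV)"
  proof (rule has_derivative_series[where f' = ?f'])
    show "(Dl is (f k) has_derivative ?f' k x) (at x within UNIV)" for k x
      using has_derivative_partials[of "Dl is (f k)" x] schwartz_smooth[OF schwartz_term]
      unfolding smooth_def by simp
    show "\<forall>\<^sub>F n in sequentially. \<forall>x\<in>UNIV. \<forall>h. norm ((\<Sum>k<n. ?f' k x h) - ?g' x h) \<le> e * norm h"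
      if e: "e > 0" for e
    proof -
      have "(\<lambda>n. real CARD('d) * (\<Sum>k. c (k + n))) \<longlonglongrightarrow> 0"
        using tendsto_mult_left[OF suminf_exist_split2[OF summable_bound], of "real CARD('d)"] by simp
      hence "\<forall>\<^sub>F n in sequentially. real CARD('d) * (\<Sum>k. c (k + n)) < e \<and> length is < n"
        using order_tendstoD(2)[OF _ e] eventually_gt_at_top eventually_conj by blast
      thus ?thesis
      proof (rule eventually_mono, intro ballI allI)
        fix n x h assume n: "real CARD('d) * (\<Sum>k. c (k + n)) < e \<and> length is < n"
        have "norm ((\<Sum>k<n. ?f' k x h) - ?g' x h) \<le> real CARD('d) * (\<Sum>k. c (k + n)) * norm h"
          using n by (intro norm_sum_derivatives_diff_le) simp
        also have "\<dots> \<le> e * norm h" using n by (intro mult_right_mono) auto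
        finally show "norm ((\<Sum>k<n. ?f' k x h) - ?g' x h) \<le> e * norm h" .
      qed
    qed
    show "(\<lambda>k. Dl is (f k) x) sums Dl_series is x"
      unfolding Dl_series_def by (rule summable_sums[OF summable_Dl_terms])
  qed auto
  then obtain g where "\<And>y. (\<lambda>k. Dl is (f k) y) sums (g y)" "\<And>y. (g has_derivative ?g' y) (at y)"
    by auto
  moreover from this(1) have "g = Dl_series is"
    using sums_unique unfolding Dl_series_def by (auto simp: fun_eq_iff)
  ultimately show ?thesis by simp
qed

lemma Dl_series_eq: "Dl is series = Dl_series is"
proof (induction "is")
  case Nil then show ?case by (simp add: series_def Dl_series_def fun_eq_iff)
next
  case (Cons i "is")
  have "Dl (i # is) series = partial i (Dl_series is)" using Cons by simp
  also have "\<dots> = Dl_series (i # is)"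
    using partial_eq_derivative[OF has_derivative_Dl_series] by (auto simp: fun_eq_iff sum_axis_mult)
  finally show ?case .
qed

lemma smooth_series: "smooth series"
  unfolding smooth_def Dl_series_eq using has_derivative_Dl_series differentiable_def by blast

lemma Dl_partial_sum: "Dl is (\<lambda>x. \<Sum>k<n. f k x) = (\<lambda>x. \<Sum>k<n. Dl is (f k) x)"
  using smooth_sum_Dl_sum[of f n "is"] schwartz_smooth[OF schwartz_term] by blast

lemma partial_sum_schwartz: "(\<lambda>x. \<Sum>k<n. f k x) \<in> schwartz"
  by (rule schwartz_sum[OF schwartz_term])

lemma series_schwartz: "series \<in> schwartz"
proof -
  have "\<exists>B. \<forall>x. norm (complex_of_real (monom \<alpha> x) * Dl is series x) \<le> B" for \<alpha> "is"
  proof -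
    define n where "n = max (sum \<alpha> UNIV) (length is)"
    obtain B where B: "\<And>x. norm (complex_of_real (monom \<alpha> x) * Dl is (\<lambda>x. \<Sum>k<n. f k x) x) \<le> B"
      using partial_sum_schwartz[of n] unfolding schwartz_iff by blast
    have "norm (complex_of_real (monom \<alpha> x) * Dl is series x) \<le> (\<Sum>k. c (k + n)) + B" for x
    proof -
      have "complex_of_real (monom \<alpha> x) * Dl is series x =
          complex_of_real (monom \<alpha> x) * (Dl_series is x - (\<Sum>k<n. Dl is (f k) x))
          + complex_of_real (monom \<alpha> x) * Dl is (\<lambda>x. \<Sum>k<n. f k x) x"
        by (simp add: Dl_series_eq Dl_partial_sum algebra_simps)
      also have "norm \<dots> \<le> (\<Sum>k. c (k + n)) + B"
        by (rule order_trans[OF norm_triangle_ineq add_mono[OF norm_monom_Dl_series_tail_le B]])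
          (auto simp: n_def)
      finally show ?thesis .
    qed
    thus ?thesis by blast
  qed
  thus ?thesis using smooth_series unfolding schwartz_iff by blast
qed

lemma normMN_series_tail_le:
  assumes "M \<le> n" "N \<le> n"
  shows "normMN M N (\<lambda>x. series x - (\<Sum>k<n. f k x)) \<le> (\<Sum>k. c (k + n))"
proof (rule normMN_le)
  fix \<alpha> :: "'d \<Rightarrow> nat" and "is" :: "'d list" and x
  assume "sum \<alpha> UNIV \<le> M" "length is \<le> N"
  moreover have "Dl is (\<lambda>x. series x - (\<Sum>k<n. f k x)) x = Dl_series is x - (\<Sum>k<n. Dl is (f k) x)"
    using Dl_diff[OF smooth_series schwartz_smooth[OF partial_sum_schwartz]]
    by (simp add: Dl_series_eq Dl_partial_sum)
  ultimately show "norm (complex_of_real (monom \<alpha> x) * Dl is (\<lambda>x. series x - (\<Sum>k<n. f k x)) x)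
      \<le> (\<Sum>k. c (k + n))"
    using norm_monom_Dl_series_tail_le[of \<alpha> n "is" x] assms by simp
qed

end

section \<open>Bounded translates are uniformly bounded\<close>

lemma tempered_transl_le:
  fixes \<psi> :: "'d::finite testfun \<Rightarrow> complex"
  assumes "tempered \<psi>"
  obtains C M N where "C > 0"
    "\<And>g t. g \<in> schwartz \<Longrightarrow> norm (\<psi> (transl t g)) \<le> C * (1 + norm t) ^ M * normMN M N g"
proof -
  obtain C0 M N where C0: "C0 > 0" and bound: "\<And>g. g \<in> schwartz \<Longrightarrow> norm (\<psi> g) \<le> C0 * normMN M N g"
    using tempered_le_normMN[OF assms] by blast
  define C where "C = C0 * 2 ^ M * (1 + real CARD('d) ^ M)"
  have "norm (\<psi> (transl t g)) \<le> C * (1 + norm t) ^ M * normMN M N g" if g: "g \<in> schwartz" for g t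
  proof -
    have "norm (\<psi> (transl t g)) \<le> C0 * normMN M N (transl t g)"
      by (rule bound[OF transl_schwartz[OF g]])
    also have "\<dots> \<le> C0 * ((1 + norm t) ^ M * 2 ^ M * (1 + real CARD('d) ^ M) * normMN M N g)"
      by (intro mult_left_mono normMN_transl_le g) (use C0 in auto)
    finally show ?thesis by (simp add: C_def algebra_simps)
  qed
  moreover have "C > 0" using C0 by (simp add: C_def add_pos_nonneg)
  ultimately show ?thesis using that by blast
qed

lemma summable_weighted_geometric:
  fixes c w :: "nat \<Rightarrow> real"
  assumes c0: "\<And>k. 0 \<le> c k" and c: "\<And>k. c k \<le> (1/2) ^ k / (1 + (\<Sum>j<k. w j))"
    and w: "\<And>j. 0 \<le> w j"
  shows "summable c"
proof (rule summable_comparison_test'[OF summable_geometric[of "1/2 :: real"], of 0])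
  fix k
  have "(1/2 :: real) ^ k / (1 + (\<Sum>j<k. w j)) \<le> (1/2) ^ k / 1"
    by (rule divide_left_mono) (use sum_nonneg[of "{..<k}" w] w in auto)
  thus "norm (c k) \<le> (1/2) ^ k" using c[of k] c0[of k] by simp
qed simp

lemma geometric_tail_le:
  fixes c w :: "nat \<Rightarrow> real"
  assumes c0: "\<And>k. 0 \<le> c k" and c: "\<And>k. c k \<le> (1/2) ^ k / (1 + (\<Sum>j<k. w j))"
    and w: "\<And>j. 0 \<le> w j"
  shows "(\<Sum>k. c (k + Suc n)) \<le> 1 / (1 + w n)"
proof -
  have "summable c" by (rule summable_weighted_geometric[OF c0 c w])
  have "(\<Sum>k. c (k + Suc n)) \<le> (\<Sum>k. (1/2) ^ k * ((1/2) / (1 + w n)))"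
  proof (rule suminf_le)
    fix k
    have "w n \<le> (\<Sum>j<k + Suc n. w j)" by (rule member_le_sum) (use w in auto)
    hence "c (k + Suc n) \<le> (1/2) ^ (k + Suc n) / (1 + w n)"
      using c[of "k + Suc n"] w[of n] by (elim order_trans, intro divide_left_mono) auto
    also have "\<dots> \<le> (1/2) ^ Suc k / (1 + w n)"
      using w[of n] by (intro divide_right_mono power_decreasing) auto
    finally show "c (k + Suc n) \<le> (1/2) ^ k * ((1/2) / (1 + w n))" by simp
  next
    show "summable (\<lambda>k. c (k + Suc n))" using summable_iff_shift \<open>summable c\<close> by blast
  qed (intro summable_mult2 summable_geometric, simp)
  also have "\<dots> = 2 * ((1/2) / (1 + w n))"
    using sums_mult2[OF geometric_sums[of "1/2 :: real"], of "(1/2) / (1 + w n)"]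
    by (simp add: sums_iff)
  finally show ?thesis using w[of n] by (simp add: field_simps)
qed

lemma large_translate_small_seminorm:
  fixes \<psi> :: "'d::finite testfun \<Rightarrow> complex"
  assumes tempered: "tempered \<psi>" and unbounded: "\<And>M N C. C > 0 \<Longrightarrow> \<not> uniform_transl_bound \<psi> M N C"
    and e: "e > 0"
  shows "\<exists>g t. g \<in> schwartz \<and> normMN k k g \<le> e \<and> L \<le> norm (\<psi> (transl t g))"
proof -
  define C where "C = (\<bar>L\<bar> + 1) / e"
  have "C > 0" using e by (simp add: C_def add_pos_nonneg)
  hence "\<not> uniform_transl_bound \<psi> k k C" by (rule unbounded)
  then obtain g t where g: "g \<in> schwartz" and gt: "\<not> norm (\<psi> (transl t g)) \<le> C * normMN k k g"
    unfolding uniform_transl_bound_def by blast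
  define m where "m = normMN k k g"
  have gt: "C * m < norm (\<psi> (transl t g))" using gt by (simp add: m_def)
  have "m \<noteq> 0"
  proof
    assume "m = 0"
    hence "g = (\<lambda>_. 0)" using normMN_eq_0D[OF g] by (simp add: m_def)
    with gt \<open>m = 0\<close> show False by (simp add: transl_def tempered_zero[OF tempered])
  qed
  hence m: "m > 0" using normMN_nonneg[OF g, of k k] unfolding m_def by linarith
  define g' where "g' = (\<lambda>x. complex_of_real (e / m) * g x)"
  have "g' \<in> schwartz" unfolding g'_def by (rule schwartz_scale[OF g])
  moreover have "normMN k k g' = e"
    unfolding g'_def normMN_scale[OF g] m_def[symmetric] using m e by (simp add: norm_divide)
  moreover have "L \<le> norm (\<psi> (transl t g'))"
  proof -
    have "L < e / m * (C * m)" using m e by (simp add: C_def)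
    also have "\<dots> \<le> e / m * norm (\<psi> (transl t g))"
      using less_imp_le[OF gt] m e by (intro mult_left_mono) auto
    also have "\<dots> = norm (\<psi> (transl t g'))"
      using tempered_scale[OF tempered transl_schwartz[OF g, of t], of "complex_of_real (e / m)"] m e
      by (simp add: g'_def transl_def norm_mult norm_divide)
    finally show ?thesis by simp
  qed
  ultimately show ?thesis by (intro exI[of _ g'] exI[of _ t]) simp
qed

text \<open>With \<open>W\<close> bounding the growth of \<open>\<psi>\<close>'s translates, the factor
  \<open>1 / (1 + \<Sum>j<k. W (t j))\<close> makes all terms after \<open>g j\<close> invisible to \<open>\<psi>\<close> at \<open>t j\<close>; the lower
  bound makes the translate of \<open>g k\<close> by \<open>t k\<close> outweigh the bounds \<open>B\<close> of the earlier terms.\<close>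

lemma gliding_hump_sequence:
  fixes \<psi> :: "'d::finite testfun \<Rightarrow> complex" and W :: "real^'d \<Rightarrow> real" and B :: "'d testfun \<Rightarrow> real"
  assumes W: "\<And>t. 0 \<le> W t"
    and pick: "\<And>k e L. e > 0 \<Longrightarrow> \<exists>g t. g \<in> schwartz \<and> normMN k k g \<le> e \<and> L \<le> norm (\<psi> (transl t g))"
  obtains g t where "\<And>k. g k \<in> schwartz"
    "\<And>k. normMN k k (g k) \<le> (1/2) ^ k / (1 + (\<Sum>j<k. W (t j)))"
    "\<And>k. real k + (\<Sum>j<k. B (g j)) + 2 \<le> norm (\<psi> (transl (t k) (g k)))"
proof -
  define P where "P F k p \<longleftrightarrow> fst p \<in> schwartz
      \<and> normMN k k (fst p) \<le> (1/2) ^ k / (1 + (\<Sum>j<k. W (snd (F j))))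
      \<and> real k + (\<Sum>j<k. B (fst (F j))) + 2 \<le> norm (\<psi> (transl (snd p) (fst p)))"
    for F :: "nat \<Rightarrow> 'd testfun \<times> (real^'d)" and k p
  have "\<exists>F. \<forall>k. P F k (F k)"
  proof (rule dependent_wellorder_choice)
    fix p and F F' :: "nat \<Rightarrow> 'd testfun \<times> (real^'d)" and k :: nat
    assume "\<And>j. j < k \<Longrightarrow> F j = F' j"
    hence "(\<Sum>j<k. W (snd (F j))) = (\<Sum>j<k. W (snd (F' j)))"
      and "(\<Sum>j<k. B (fst (F j))) = (\<Sum>j<k. B (fst (F' j)))"
      by (auto intro!: sum.cong)
    thus "P F k p = P F' k p" unfolding P_def by simp
  next
    fix F :: "nat \<Rightarrow> 'd testfun \<times> (real^'d)" and k
    have "(1/2) ^ k / (1 + (\<Sum>j<k. W (snd (F j)))) > (0::real)"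
      using sum_nonneg[of "{..<k}" "\<lambda>j. W (snd (F j))"] W by (simp add: add_pos_nonneg)
    from pick[OF this, of k "real k + (\<Sum>j<k. B (fst (F j))) + 2"]
    show "\<exists>p. P F k p" unfolding P_def by auto
  qed
  then obtain F where "\<And>k. P F k (F k)" by blast
  thus ?thesis using that[of "\<lambda>k. fst (F k)" "\<lambda>k. snd (F k)"] unfolding P_def by blast
qed

lemma bounded_translates_imp_uniform_transl_bound:
  fixes \<psi> :: "'d::finite testfun \<Rightarrow> complex"
  assumes tempered: "tempered \<psi>"
    and bounded: "\<And>g. g \<in> schwartz \<Longrightarrow> bounded (range (\<lambda>t. \<psi> (transl t g)))"
  shows "\<exists>M N C. C > 0 \<and> uniform_transl_bound \<psi> M N C"
proof (rule ccontr)
  assume "\<not> ?thesis"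
  hence unbounded: "\<And>M N C. C > 0 \<Longrightarrow> \<not> uniform_transl_bound \<psi> M N C" by blast
  obtain C0 M0 N0 where C0: "C0 > 0" and growth: "\<And>g t. g \<in> schwartz \<Longrightarrow>
      norm (\<psi> (transl t g)) \<le> C0 * (1 + norm t) ^ M0 * normMN M0 N0 g"
    using tempered_transl_le[OF tempered] by blast
  define W where "W t = C0 * (1 + norm t) ^ M0" for t :: "real^'d"
  have W: "0 \<le> W t" for t using C0 by (simp add: W_def)
  have "\<forall>g. \<exists>b. g \<in> schwartz \<longrightarrow> (\<forall>t. norm (\<psi> (transl t g)) \<le> b)"
    using bounded unfolding bounded_range_iff by blast
  then obtain B where B: "\<And>g t. g \<in> schwartz \<Longrightarrow> norm (\<psi> (transl t g)) \<le> B g"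
    by (metis (full_types) choice)
  obtain g t where g: "\<And>k. g k \<in> schwartz"
    and small: "\<And>k. normMN k k (g k) \<le> (1/2) ^ k / (1 + (\<Sum>j<k. W (t j)))"
    and large: "\<And>k. real k + (\<Sum>j<k. B (g j)) + 2 \<le> norm (\<psi> (transl (t k) (g k)))"
    using gliding_hump_sequence[where W = W and B = B,
        OF W large_translate_small_seminorm[OF tempered unbounded]] by blast
  interpret S: schwartz_series g "\<lambda>k. normMN k k (g k)"
    using g summable_weighted_geometric[OF normMN_nonneg[OF g] small W] by unfold_locales auto
  obtain BF where BF: "\<And>s. norm (\<psi> (transl s S.series)) \<le> BF"
    using bounded[OF S.series_schwartz] unfolding bounded_range_iff by blast
  define n where "n = max (max M0 N0) (nat \<lceil>BF\<rceil>)"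
  define s where "s = t n"
  define R where "R = (\<lambda>x. S.series x - (\<Sum>k<Suc n. g k x))"
  have R: "R \<in> schwartz" unfolding R_def by (rule schwartz_diff[OF S.series_schwartz S.partial_sum_schwartz])
  have "norm (\<psi> (transl s R)) \<le> W s * normMN M0 N0 R" using growth[OF R] by (simp add: W_def)
  also have "\<dots> \<le> W s * (1 / (1 + W s))"
    using order_trans[OF S.normMN_series_tail_le geometric_tail_le[OF normMN_nonneg[OF g] small W]] W
    by (intro mult_left_mono) (auto simp: R_def s_def n_def)
  also have "\<dots> \<le> 1" using W[of s] by (simp add: field_simps)
  finally have R_small: "norm (\<psi> (transl s R)) \<le> 1" .
  have "norm (\<psi> (transl s (g n)))
      \<le> norm (\<psi> (transl s S.series)) + norm (\<Sum>k<n. \<psi> (transl s (g k))) + norm (\<psi> (transl s R))"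
    using norm_tempered_term_le[OF tempered, of "\<lambda>k. transl s (g k)" "transl s S.series" n]
      transl_schwartz[OF g] transl_schwartz[OF S.series_schwartz]
    by (simp add: R_def transl_def)
  also have "\<dots> \<le> BF + (\<Sum>k<n. B (g k)) + 1"
    using BF R_small B[OF g] by (intro add_mono order_trans[OF norm_sum sum_mono]) auto
  finally have "real n + (\<Sum>k<n. B (g k)) + 2 \<le> BF + (\<Sum>k<n. B (g k)) + 1"
    using large[of n] by (simp add: s_def)
  moreover have "BF \<le> real n" unfolding n_def by linarith
  ultimately show False by linarith
qed

theorem proposition2p2:
  fixes \<psi> :: "(real^'d::finite \<Rightarrow> complex) \<Rightarrow> complex"
  assumes "tempered \<psi>"
  shows "((\<forall>f\<in>schwartz. bounded (range (dconv \<psi> f)))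
           \<longleftrightarrow> (\<forall>f\<in>schwartz. bounded (range (dconv \<psi> f)) \<and>
                               uniformly_continuous_on UNIV (dconv \<psi> f)))
       \<and> ((\<forall>f\<in>schwartz. bounded (range (dconv \<psi> f)))
           \<longleftrightarrow> (\<exists>M N C. C > 0 \<and>
                  (\<forall>f\<in>schwartz. \<forall>t. norm (dconv \<psi> f t) \<le> C * normMN M N f)))
       \<and> ((\<forall>f\<in>schwartz. bounded (range (dconv \<psi> f)))
           \<longleftrightarrow> equicont_S (\<lambda>t. transl_distr t \<psi>) UNIV)"
proof -
  let ?bounded = "\<forall>f\<in>schwartz. bounded (range (dconv \<psi> f))"
  have bounded_iff: "?bounded \<longleftrightarrow> (\<exists>M N C. C > 0 \<and> uniform_transl_bound \<psi> M N C)"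
    using bounded_dconv_iff_bounded_translates[of \<psi>] uniform_transl_bound_imp_bounded[of \<psi>]
      bounded_translates_imp_uniform_transl_bound[OF assms] by blast
  have "uniformly_continuous_on UNIV (dconv \<psi> f)" if ?bounded "f \<in> schwartz" for f
    using that bounded_iff uniformly_continuous_dconv[OF assms] by (meson less_imp_le)
  moreover have "(\<exists>M N C. C > 0 \<and> uniform_transl_bound \<psi> M N C)
      \<longleftrightarrow> equicont_S (\<lambda>t. transl_distr t \<psi>) UNIV"
    using uniform_transl_bound_imp_equicont[OF assms] equicont_imp_uniform_transl_bound[OF assms]
    by blast
  ultimately show ?thesis unfolding dconv_le_normMN_iff using bounded_iff by blast
qed

end
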